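(* Let $\mathbb{E}$ be a regular category and $(f,s)\colon X\rightleftarrows Y$ a split epimorphism. Then $(f,s)$ is strongly split if and only if, for every monomorphism $m\colon Y'\rightarrowtail Y$ with pullback $n\colon X'\rightarrowtail X$ of $m$ along $f$, the pair of monomorphisms $(s,n)$ is jointly strongly epic, i.e. the subobject $1_X$ is the supremum of the subobjects $s$ and $n$.
   Context: A split epimorphism is a pair $(f,s)$ with $fs=1$. A pair of morphisms with common codomain $Z$ is jointly extremally (equivalently, in a regular category, strongly) epic if it factors jointly through no non-invertible monomorphism into $Z$. A split epimorphism $(f,s)\colon X\rightleftarrows Y$ is strongly split when, for every morphism $y\colon\bar Y\to Y$, with $x\colon\bar X=\bar Y\times_YX\to X$ the pullback projection, the pair $(x,s)$ is jointly extremally epic. *)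

theory Defs
  imports Main
begin

text \<open>Composition is written in applicative order:
Comp C g f is g after f, meaningful when Cod f = Dom g.\<close>

record ('o, 'a) cat =
  Obj  :: "'o set"
  Arr  :: "'a set"
  Dom  :: "'a \<Rightarrow> 'o"
  Cod  :: "'a \<Rightarrow> 'o"
  Id   :: "'o \<Rightarrow> 'a"
  Comp :: "'a \<Rightarrow> 'a \<Rightarrow> 'a"

definition hom :: "('o, 'a, 'm) cat_scheme \<Rightarrow> 'o \<Rightarrow> 'o \<Rightarrow> 'a set" where
  "hom C a b = {f \<in> Arr C. Dom C f = a \<and> Cod C f = b}"

definition category :: "('o, 'a, 'm) cat_scheme \<Rightarrow> bool" where
  "category C \<longleftrightarrow>
     (\<forall>f \<in> Arr C. Dom C f \<in> Obj C \<and> Cod C f \<in> Obj C) \<and>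
     (\<forall>a \<in> Obj C. Id C a \<in> hom C a a) \<and>
     (\<forall>f \<in> Arr C. \<forall>g \<in> Arr C. Cod C f = Dom C g \<longrightarrow>
        Comp C g f \<in> hom C (Dom C f) (Cod C g)) \<and>
     (\<forall>f \<in> Arr C. \<forall>g \<in> Arr C. \<forall>h \<in> Arr C. Cod C f = Dom C g \<and> Cod C g = Dom C h \<longrightarrow>
        Comp C h (Comp C g f) = Comp C (Comp C h g) f) \<and>
     (\<forall>f \<in> Arr C. Comp C f (Id C (Dom C f)) = f \<and> Comp C (Id C (Cod C f)) f = f)"

definition mono :: "('o, 'a, 'm) cat_scheme \<Rightarrow> 'a \<Rightarrow> bool" where
  "mono C m \<longleftrightarrow> m \<in> Arr C \<and>
     (\<forall>g \<in> Arr C. \<forall>h \<in> Arr C. Cod C g = Dom C m \<and> Cod C h = Dom C m \<and> Dom C g = Dom C h \<and>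
        Comp C m g = Comp C m h \<longrightarrow> g = h)"

definition iso :: "('o, 'a, 'm) cat_scheme \<Rightarrow> 'a \<Rightarrow> bool" where
  "iso C m \<longleftrightarrow> m \<in> Arr C \<and>
     (\<exists>g \<in> hom C (Cod C m) (Dom C m).
        Comp C g m = Id C (Dom C m) \<and> Comp C m g = Id C (Cod C m))"

definition is_pullback :: "('o, 'a, 'm) cat_scheme \<Rightarrow> 'a \<Rightarrow> 'a \<Rightarrow> 'a \<Rightarrow> 'a \<Rightarrow> bool" where
  "is_pullback C f g p q \<longleftrightarrow>
     f \<in> Arr C \<and> g \<in> Arr C \<and> p \<in> Arr C \<and> q \<in> Arr C \<and>
     Cod C f = Cod C g \<and> Cod C p = Dom C f \<and> Cod C q = Dom C g \<and> Dom C p = Dom C q \<and>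
     Comp C f p = Comp C g q \<and>
     (\<forall>p' \<in> Arr C. \<forall>q' \<in> Arr C.
        Cod C p' = Dom C f \<and> Cod C q' = Dom C g \<and> Dom C p' = Dom C q' \<and>
        Comp C f p' = Comp C g q' \<longrightarrow>
        (\<exists>!u. u \<in> hom C (Dom C p') (Dom C p) \<and> Comp C p u = p' \<and> Comp C q u = q'))"

definition is_terminal :: "('o, 'a, 'm) cat_scheme \<Rightarrow> 'o \<Rightarrow> bool" where
  "is_terminal C t \<longleftrightarrow> t \<in> Obj C \<and> (\<forall>a \<in> Obj C. \<exists>!f. f \<in> hom C a t)"

definition has_pullbacks :: "('o, 'a, 'm) cat_scheme \<Rightarrow> bool" where
  "has_pullbacks C \<longleftrightarrow>
     (\<forall>f \<in> Arr C. \<forall>g \<in> Arr C. Cod C f = Cod C g \<longrightarrow> (\<exists>p q. is_pullback C f g p q))"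

definition finitely_complete :: "('o, 'a, 'm) cat_scheme \<Rightarrow> bool" where
  "finitely_complete C \<longleftrightarrow> (\<exists>t. is_terminal C t) \<and> has_pullbacks C"

definition is_coequalizer :: "('o, 'a, 'm) cat_scheme \<Rightarrow> 'a \<Rightarrow> 'a \<Rightarrow> 'a \<Rightarrow> bool" where
  "is_coequalizer C u v q \<longleftrightarrow>
     u \<in> Arr C \<and> v \<in> Arr C \<and> q \<in> Arr C \<and>
     Dom C u = Dom C v \<and> Cod C u = Cod C v \<and> Dom C q = Cod C u \<and>
     Comp C q u = Comp C q v \<and>
     (\<forall>w \<in> Arr C. Dom C w = Cod C u \<and> Comp C w u = Comp C w v \<longrightarrow>
        (\<exists>!h. h \<in> hom C (Cod C q) (Cod C w) \<and> Comp C h q = w))"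

definition regular_epi :: "('o, 'a, 'm) cat_scheme \<Rightarrow> 'a \<Rightarrow> bool" where
  "regular_epi C q \<longleftrightarrow> (\<exists>u v. is_coequalizer C u v q)"

definition regular_category :: "('o, 'a, 'm) cat_scheme \<Rightarrow> bool" where
  "regular_category C \<longleftrightarrow>
     category C \<and> finitely_complete C \<and>
     (\<forall>f p1 p2. is_pullback C f f p1 p2 \<longrightarrow> (\<exists>q. is_coequalizer C p1 p2 q)) \<and>
     (\<forall>q g p q'. regular_epi C q \<and> is_pullback C q g p q' \<longrightarrow> regular_epi C q')"

definition jointly_extremally_epic :: "('o, 'a, 'm) cat_scheme \<Rightarrow> 'a \<Rightarrow> 'a \<Rightarrow> bool" where
  "jointly_extremally_epic C a b \<longleftrightarrow>
     a \<in> Arr C \<and> b \<in> Arr C \<and> Cod C a = Cod C b \<and>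
     (\<forall>m. mono C m \<and> Cod C m = Cod C a \<and>
        (\<exists>a' \<in> Arr C. Cod C a' = Dom C m \<and> Comp C m a' = a) \<and>
        (\<exists>b' \<in> Arr C. Cod C b' = Dom C m \<and> Comp C m b' = b) \<longrightarrow> iso C m)"

definition jointly_strongly_epic :: "('o, 'a, 'm) cat_scheme \<Rightarrow> 'a \<Rightarrow> 'a \<Rightarrow> bool" where
  "jointly_strongly_epic C a b \<longleftrightarrow>
     a \<in> Arr C \<and> b \<in> Arr C \<and> Cod C a = Cod C b \<and>
     (\<forall>m v a' b'. mono C m \<and> v \<in> hom C (Cod C a) (Cod C m) \<and>
        a' \<in> hom C (Dom C a) (Dom C m) \<and> b' \<in> hom C (Dom C b) (Dom C m) \<and>
        Comp C m a' = Comp C v a \<and> Comp C m b' = Comp C v b \<longrightarrow>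
        (\<exists>!d. d \<in> hom C (Cod C a) (Dom C m) \<and> Comp C m d = v \<and>
               Comp C d a = a' \<and> Comp C d b = b'))"

definition split_epi :: "('o, 'a, 'm) cat_scheme \<Rightarrow> 'a \<Rightarrow> 'a \<Rightarrow> bool" where
  "split_epi C f s \<longleftrightarrow> f \<in> Arr C \<and> s \<in> hom C (Cod C f) (Dom C f) \<and>
     Comp C f s = Id C (Cod C f)"

definition strongly_split :: "('o, 'a, 'm) cat_scheme \<Rightarrow> 'a \<Rightarrow> 'a \<Rightarrow> bool" where
  "strongly_split C f s \<longleftrightarrow>
     (\<forall>y x y'. y \<in> Arr C \<and> Cod C y = Cod C f \<and> is_pullback C f y x y' \<longrightarrow>
        jointly_extremally_epic C x s)"

end

theory Submission
  imports Defs
begin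

text \<open>In a category with pullbacks a pair of arrows is jointly strongly epic if and only if it is
  jointly extremally epic: given a square from the pair into a monomorphism m, pull m back along
  the bottom arrow; the pair factors through this pullback, which is therefore invertible. So both
  sides of the equivalence concern joint extremal epimorphy, and the condition on monomorphisms
  is a special case of strong splitness. Conversely, factor an arbitrary y : Y' \<rightarrow> Y as a
  regular epimorphism e followed by a monomorphism m and let n be the pullback of f along m. By
  the pullback lemma the pullback x of f along y = m e is n composed with a pullback of e, which
  is again a regular epimorphism. Since regular epimorphisms are orthogonal to monomorphisms,
  every monomorphism through which x and s factor also admits n, so it is invertible because
  (s, n) is jointly extremally epic.\<close>

definition epi :: "('o, 'a, 'm) cat_scheme \<Rightarrow> 'a \<Rightarrow> bool" where
  "epi C e \<longleftrightarrow> e \<in> Arr C \<and>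
     (\<forall>g \<in> Arr C. \<forall>h \<in> Arr C. Dom C g = Cod C e \<and> Dom C h = Cod C e \<and> Cod C h = Cod C g \<and>
        Comp C g e = Comp C h e \<longrightarrow> g = h)"

lemma ex1_unique: "\<exists>!x. P x \<Longrightarrow> P a \<Longrightarrow> P b \<Longrightarrow> a = b"
  by blast

lemma jointly_extremally_epic_commute:
  "jointly_extremally_epic C a b \<longleftrightarrow> jointly_extremally_epic C b a"
  unfolding jointly_extremally_epic_def by auto

lemma jointly_extremally_epic_arr:
  "jointly_extremally_epic C a b \<Longrightarrow> a \<in> Arr C \<and> b \<in> Arr C \<and> Cod C a = Cod C b"
  unfolding jointly_extremally_epic_def by (elim conjE) (intro conjI)

lemma jointly_strongly_epic_arr:
  "jointly_strongly_epic C a b \<Longrightarrow> a \<in> Arr C \<and> b \<in> Arr C \<and> Cod C a = Cod C b"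
  unfolding jointly_strongly_epic_def by (elim conjE) (intro conjI)

locale elementary_category =
  fixes C :: "('o, 'a, 'm) cat_scheme"
  assumes category: "category C"
begin

abbreviation arr :: "'a \<Rightarrow> bool" where "arr f \<equiv> f \<in> Arr C"

abbreviation comp_in :: "'a \<Rightarrow> 'a \<Rightarrow> 'a" (infixr "\<cdot>" 55) where "g \<cdot> f \<equiv> Comp C g f"

lemma dom_obj: "arr f \<Longrightarrow> Dom C f \<in> Obj C"
  using category unfolding category_def by simp

lemma cod_obj: "arr f \<Longrightarrow> Cod C f \<in> Obj C"
  using category unfolding category_def by simp

lemma id_in_hom: "a \<in> Obj C \<Longrightarrow> Id C a \<in> hom C a a"
  using category unfolding category_def by simp

lemma id_arr [simp]: "a \<in> Obj C \<Longrightarrow> arr (Id C a)"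
  and dom_id [simp]: "a \<in> Obj C \<Longrightarrow> Dom C (Id C a) = a"
  and cod_id [simp]: "a \<in> Obj C \<Longrightarrow> Cod C (Id C a) = a"
  using id_in_hom unfolding hom_def by simp_all

lemma comp_in_hom: "arr f \<Longrightarrow> arr g \<Longrightarrow> Cod C f = Dom C g \<Longrightarrow> g \<cdot> f \<in> hom C (Dom C f) (Cod C g)"
  using category unfolding category_def by simp

lemma comp_arr [simp]: "arr f \<Longrightarrow> arr g \<Longrightarrow> Cod C f = Dom C g \<Longrightarrow> arr (g \<cdot> f)"
  and dom_comp [simp]: "arr f \<Longrightarrow> arr g \<Longrightarrow> Cod C f = Dom C g \<Longrightarrow> Dom C (g \<cdot> f) = Dom C f"
  and cod_comp [simp]: "arr f \<Longrightarrow> arr g \<Longrightarrow> Cod C f = Dom C g \<Longrightarrow> Cod C (g \<cdot> f) = Cod C g"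
  using comp_in_hom unfolding hom_def by simp_all

lemma comp_assoc [simp]:
  "arr f \<Longrightarrow> arr g \<Longrightarrow> arr h \<Longrightarrow> Cod C f = Dom C g \<Longrightarrow> Cod C g = Dom C h \<Longrightarrow>
   (h \<cdot> g) \<cdot> f = h \<cdot> g \<cdot> f"
  using category unfolding category_def by simp

text \<open>The identity laws name the object explicitly so that they still apply after simp has
  rewritten the domain or codomain of f.\<close>

lemma comp_id_left [simp]: "arr f \<Longrightarrow> Cod C f = b \<Longrightarrow> Id C b \<cdot> f = f"
  and comp_id_right [simp]: "arr f \<Longrightarrow> Dom C f = a \<Longrightarrow> f \<cdot> Id C a = f"
  using category unfolding category_def by auto

text \<open>Since simp keeps composites right-associated, a commuting square or triangle is used
  through the following two lemmas, which precompose it with an arbitrary arrow.\<close>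

lemma comp_square:
  assumes "g \<cdot> f = k \<cdot> h" "arr x" "arr f" "arr g" "arr h" "arr k"
    "Cod C x = Dom C f" "Cod C f = Dom C g" "Cod C x = Dom C h" "Cod C h = Dom C k"
  shows "g \<cdot> f \<cdot> x = k \<cdot> h \<cdot> x"
proof -
  have "(g \<cdot> f) \<cdot> x = (k \<cdot> h) \<cdot> x"
    using assms(1) by simp
  then show ?thesis
    using assms(2-) by simp
qed

lemma comp_reassoc:
  assumes "g \<cdot> f = h" "arr x" "arr f" "arr g" "Cod C x = Dom C f" "Cod C f = Dom C g"
  shows "g \<cdot> f \<cdot> x = h \<cdot> x"
proof -
  have "g \<cdot> f \<cdot> x = (g \<cdot> f) \<cdot> x"
    using assms(2-) by simp
  then show ?thesis
    using assms(1) by simp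
qed

section \<open>Monomorphisms, epimorphisms and isomorphisms\<close>

lemma monoD:
  assumes "mono C m" "arr g" "arr h" "Cod C g = Dom C m" "Cod C h = Dom C m" "Dom C h = Dom C g"
    "m \<cdot> g = m \<cdot> h"
  shows "g = h"
  using assms unfolding mono_def by auto

lemma mono_arr: "mono C m \<Longrightarrow> arr m"
  unfolding mono_def by simp

lemma monoI:
  assumes "arr m" and "\<And>g h. arr g \<Longrightarrow> arr h \<Longrightarrow> Cod C g = Dom C m \<Longrightarrow> Cod C h = Dom C m \<Longrightarrow>
    Dom C h = Dom C g \<Longrightarrow> m \<cdot> g = m \<cdot> h \<Longrightarrow> g = h"
  shows "mono C m"
  using assms unfolding mono_def by auto

lemma isoE:
  assumes "iso C f"
  obtains g where "arr g" "Dom C g = Cod C f" "Cod C g = Dom C f"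
    "g \<cdot> f = Id C (Dom C f)" "f \<cdot> g = Id C (Cod C f)"
  using assms unfolding iso_def hom_def by auto

lemma mono_split_epi_iso:
  assumes m: "mono C m" and r: "arr r" "Dom C r = Cod C m" "Cod C r = Dom C m"
    and mr: "m \<cdot> r = Id C (Cod C m)"
  shows "iso C m"
proof -
  have "arr m" by (fact mono_arr[OF m])
  have "m \<cdot> r \<cdot> m = (m \<cdot> r) \<cdot> m"
    using \<open>arr m\<close> r by simp
  also have "\<dots> = m \<cdot> Id C (Dom C m)"
    using \<open>arr m\<close> mr by simp
  finally have "m \<cdot> r \<cdot> m = m \<cdot> Id C (Dom C m)" .
  then have "r \<cdot> m = Id C (Dom C m)"
    by (rule monoD[OF m, rotated -1]) (use \<open>arr m\<close> r in \<open>auto simp: dom_obj\<close>)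
  with \<open>arr m\<close> r mr show ?thesis
    unfolding iso_def hom_def by (intro conjI bexI[of _ r]) simp_all
qed

lemma epiD:
  assumes "epi C e" "arr g" "arr h" "Dom C g = Cod C e" "Dom C h = Cod C e" "Cod C h = Cod C g"
    "g \<cdot> e = h \<cdot> e"
  shows "g = h"
  using assms unfolding epi_def by auto

lemma epi_arr: "epi C e \<Longrightarrow> arr e"
  unfolding epi_def by simp

lemma epiI:
  assumes "arr e" and "\<And>g h. arr g \<Longrightarrow> arr h \<Longrightarrow> Dom C g = Cod C e \<Longrightarrow> Dom C h = Cod C e \<Longrightarrow>
    Cod C h = Cod C g \<Longrightarrow> g \<cdot> e = h \<cdot> e \<Longrightarrow> g = h"
  shows "epi C e"
  using assms unfolding epi_def by auto

lemma epi_comp: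
  assumes e: "epi C e" and e': "epi C e'" and "Cod C e' = Dom C e"
  shows "epi C (e \<cdot> e')"
proof (rule epiI)
  note arrs = epi_arr[OF e] epi_arr[OF e']
  show "arr (e \<cdot> e')"
    using arrs assms(3) by simp
  fix g h assume gh: "arr g" "arr h" "Dom C g = Cod C (e \<cdot> e')" "Dom C h = Cod C (e \<cdot> e')"
    "Cod C h = Cod C g" and eq: "g \<cdot> e \<cdot> e' = h \<cdot> e \<cdot> e'"
  have "g \<cdot> e = h \<cdot> e"
    by (rule epiD[OF e', rotated -1]) (use arrs assms(3) gh eq in simp_all)
  then show "g = h"
    by (rule epiD[OF e, rotated -1]) (use arrs assms(3) gh in simp_all)
qed

section \<open>Pullbacks\<close>

lemma pullbackD:
  assumes "is_pullback C f g p q"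
  shows "arr f" "arr g" "arr p" "arr q" "Cod C g = Cod C f" "Cod C p = Dom C f"
    "Cod C q = Dom C g" "Dom C q = Dom C p" "f \<cdot> p = g \<cdot> q"
  using assms unfolding is_pullback_def by (simp_all del: comp_assoc)

lemma pullback_universal:
  assumes "is_pullback C f g p q" "arr p'" "arr q'" "Cod C p' = Dom C f" "Cod C q' = Dom C g"
    "Dom C q' = Dom C p'" "f \<cdot> p' = g \<cdot> q'"
  shows "\<exists>!u. u \<in> hom C (Dom C p') (Dom C p) \<and> p \<cdot> u = p' \<and> q \<cdot> u = q'"
proof -
  from assms(1) have "\<forall>p' \<in> Arr C. \<forall>q' \<in> Arr C.
      Cod C p' = Dom C f \<and> Cod C q' = Dom C g \<and> Dom C p' = Dom C q' \<and> f \<cdot> p' = g \<cdot> q' \<longrightarrow>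
      (\<exists>!u. u \<in> hom C (Dom C p') (Dom C p) \<and> p \<cdot> u = p' \<and> q \<cdot> u = q')"
    unfolding is_pullback_def by (elim conjE)
  from this[rule_format, OF assms(2,3)] show ?thesis
    using assms(4-) by simp
qed

lemma pullback_lift:
  assumes "is_pullback C f g p q" "arr p'" "arr q'" "Cod C p' = Dom C f" "Cod C q' = Dom C g"
    "Dom C q' = Dom C p'" "f \<cdot> p' = g \<cdot> q'"
  obtains u where "arr u" "Dom C u = Dom C p'" "Cod C u = Dom C p" "p \<cdot> u = p'" "q \<cdot> u = q'"
  using pullback_universal[OF assms] unfolding hom_def by auto

lemma pullback_jointly_monic:
  assumes pb: "is_pullback C f g p q" and u: "arr u" "arr u'" "Cod C u = Dom C p" "Cod C u' = Dom C p"
    "Dom C u' = Dom C u" and eq: "p \<cdot> u = p \<cdot> u'" "q \<cdot> u = q \<cdot> u'"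
  shows "u = u'"
proof -
  note sq = pullbackD[OF pb]
  have "f \<cdot> p \<cdot> u = g \<cdot> q \<cdot> u"
    by (rule comp_square[OF sq(9)]) (use u sq in simp_all)
  then have "\<exists>!w. w \<in> hom C (Dom C (p \<cdot> u)) (Dom C p) \<and> p \<cdot> w = p \<cdot> u \<and> q \<cdot> w = q \<cdot> u"
    by (intro pullback_universal[OF pb]) (use u sq in simp_all)
  then show ?thesis
    by (rule ex1_unique) (use u sq eq in \<open>simp_all add: hom_def\<close>)
qed

lemma pullbackI:
  assumes "arr f" "arr g" "arr p" "arr q" "Cod C g = Cod C f" "Cod C p = Dom C f"
    "Cod C q = Dom C g" "Dom C q = Dom C p" "f \<cdot> p = g \<cdot> q"
    and lift: "\<And>p' q'. arr p' \<Longrightarrow> arr q' \<Longrightarrow> Cod C p' = Dom C f \<Longrightarrow> Cod C q' = Dom C g \<Longrightarrow>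
      Dom C q' = Dom C p' \<Longrightarrow> f \<cdot> p' = g \<cdot> q' \<Longrightarrow>
      \<exists>u. arr u \<and> Dom C u = Dom C p' \<and> Cod C u = Dom C p \<and> p \<cdot> u = p' \<and> q \<cdot> u = q'"
    and monic: "\<And>u u'. arr u \<Longrightarrow> arr u' \<Longrightarrow> Cod C u = Dom C p \<Longrightarrow> Cod C u' = Dom C p \<Longrightarrow>
      Dom C u' = Dom C u \<Longrightarrow> p \<cdot> u = p \<cdot> u' \<Longrightarrow> q \<cdot> u = q \<cdot> u' \<Longrightarrow> u = u'"
  shows "is_pullback C f g p q"
  unfolding is_pullback_def
proof (intro conjI ballI impI)
  fix p' q' assume p': "arr p'" and q': "arr q'"
    and pq: "Cod C p' = Dom C f \<and> Cod C q' = Dom C g \<and> Dom C p' = Dom C q' \<and> f \<cdot> p' = g \<cdot> q'"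
  have "\<exists>u. arr u \<and> Dom C u = Dom C p' \<and> Cod C u = Dom C p \<and> p \<cdot> u = p' \<and> q \<cdot> u = q'"
    by (rule lift) (use p' q' pq in simp_all)
  then obtain u where u: "arr u" "Dom C u = Dom C p'" "Cod C u = Dom C p" "p \<cdot> u = p'" "q \<cdot> u = q'"
    by blast
  show "\<exists>!u. u \<in> hom C (Dom C p') (Dom C p) \<and> p \<cdot> u = p' \<and> q \<cdot> u = q'"
  proof (rule ex1I)
    show "u \<in> hom C (Dom C p') (Dom C p) \<and> p \<cdot> u = p' \<and> q \<cdot> u = q'"
      using u unfolding hom_def by simp
  next
    fix u' assume "u' \<in> hom C (Dom C p') (Dom C p) \<and> p \<cdot> u' = p' \<and> q \<cdot> u' = q'"
    then show "u' = u"
      by - (rule monic, use u in \<open>simp_all add: hom_def\<close>)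
  qed
qed (use assms in simp_all)

lemma mono_pullback:
  assumes pb: "is_pullback C f m p q" and m: "mono C m"
  shows "mono C p"
proof (rule monoI)
  note sq = pullbackD[OF pb]
  show "arr p" by (fact sq(3))
  fix g h assume gh: "arr g" "arr h" "Cod C g = Dom C p" "Cod C h = Dom C p" "Dom C h = Dom C g"
    and eq: "p \<cdot> g = p \<cdot> h"
  have "m \<cdot> q \<cdot> g = m \<cdot> q \<cdot> h"
    using gh eq sq by (simp add: comp_square[OF sq(9)[symmetric]])
  then have "q \<cdot> g = q \<cdot> h"
    by (rule monoD[OF m, rotated -1]) (use gh sq in simp_all)
  with eq show "g = h"
    by (rule pullback_jointly_monic[OF pb, rotated -2]) (use gh sq in simp_all)
qed

lemma pullback_left_square:
  assumes right: "is_pullback C g h p q" and outer: "is_pullback C g (h \<cdot> k) p' q'"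
    and k: "arr k" "Cod C k = Dom C h"
    and t: "arr t" "Dom C t = Dom C p'" "Cod C t = Dom C p" "p \<cdot> t = p'" "q \<cdot> t = k \<cdot> q'"
  shows "is_pullback C k q q' t"
proof -
  note R = pullbackD[OF right] and O = pullbackD[OF outer]
  have pt: "p \<cdot> t \<cdot> x = p' \<cdot> x" if "arr x" "Cod C x = Dom C t" for x
    using comp_reassoc[OF t(4)] that R t by simp
  show ?thesis
  proof (rule pullbackI)
    fix a b assume a: "arr a" "Cod C a = Dom C k" and b: "arr b" "Cod C b = Dom C q"
      and ab: "Dom C b = Dom C a" "k \<cdot> a = q \<cdot> b"
    have "g \<cdot> p \<cdot> b = h \<cdot> q \<cdot> b"
      by (rule comp_square[OF R(9)]) (use R a b ab in simp_all)
    also have "\<dots> = (h \<cdot> k) \<cdot> a"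
      using R k a b ab by simp
    finally have comm: "g \<cdot> p \<cdot> b = (h \<cdot> k) \<cdot> a" .
    obtain u where u: "arr u" "Dom C u = Dom C b" "Cod C u = Dom C p'"
      "p' \<cdot> u = p \<cdot> b" "q' \<cdot> u = a"
      by (rule pullback_lift[OF outer _ _ _ _ _ comm]) (use R O k a b ab in simp_all)
    have "t \<cdot> u = b"
    proof (rule pullback_jointly_monic[OF right])
      show "p \<cdot> t \<cdot> u = p \<cdot> b"
        using pt u t by simp
      show "q \<cdot> t \<cdot> u = q \<cdot> b"
        using comp_square[OF t(5), of u] R O k t u ab by simp
    qed (use R O t u b in simp_all)
    with u show "\<exists>u. arr u \<and> Dom C u = Dom C a \<and> Cod C u = Dom C q' \<and> q' \<cdot> u = a \<and> t \<cdot> u = b"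
      using O ab by auto
  next
    fix u u' assume u: "arr u" "arr u'" "Cod C u = Dom C q'" "Cod C u' = Dom C q'" "Dom C u' = Dom C u"
      and eq: "q' \<cdot> u = q' \<cdot> u'" "t \<cdot> u = t \<cdot> u'"
    have "p' \<cdot> u = p' \<cdot> u'"
      using pt[of u] pt[of u'] eq u O t(2) by simp
    then show "u = u'"
      by (rule pullback_jointly_monic[OF outer, rotated -2]) (use O t u eq in simp_all)
  qed (use R O k t in simp_all)
qed

lemma pullback_iso_factor:
  assumes pb: "is_pullback C v m p q" and p: "iso C p"
  obtains d where "arr d" "Dom C d = Dom C v" "Cod C d = Dom C m" "m \<cdot> d = v" "d \<cdot> p = q"
proof -
  note sq = pullbackD[OF pb]
  obtain i where i: "arr i" "Dom C i = Cod C p" "Cod C i = Dom C p"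
    "i \<cdot> p = Id C (Dom C p)" "p \<cdot> i = Id C (Cod C p)"
    by (rule isoE[OF p])
  have "m \<cdot> q \<cdot> i = v \<cdot> p \<cdot> i"
    by (rule comp_square[OF sq(9), symmetric]) (use sq i in simp_all)
  also have "\<dots> = v"
    using sq i by simp
  finally have "m \<cdot> q \<cdot> i = v" .
  moreover have "(q \<cdot> i) \<cdot> p = q"
    using sq i by simp
  ultimately show ?thesis
    using that[of "q \<cdot> i"] sq i by simp
qed

section \<open>Regular epimorphisms\<close>

lemma coequalizerD:
  assumes "is_coequalizer C u v e"
  shows "arr u" "arr v" "arr e" "Dom C v = Dom C u" "Cod C v = Cod C u" "Dom C e = Cod C u"
    "e \<cdot> u = e \<cdot> v"
  using assms unfolding is_coequalizer_def by (simp_all del: comp_assoc)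

lemma coequalizer_universal:
  assumes "is_coequalizer C u v e" "arr w" "Dom C w = Cod C u" "w \<cdot> u = w \<cdot> v"
  shows "\<exists>!h. h \<in> hom C (Cod C e) (Cod C w) \<and> h \<cdot> e = w"
proof -
  from assms(1) have "\<forall>w \<in> Arr C. Dom C w = Cod C u \<and> w \<cdot> u = w \<cdot> v \<longrightarrow>
      (\<exists>!h. h \<in> hom C (Cod C e) (Cod C w) \<and> h \<cdot> e = w)"
    unfolding is_coequalizer_def by (elim conjE)
  from this[rule_format, OF assms(2)] show ?thesis
    using assms(3,4) by simp
qed

lemma coequalizer_epi:
  assumes coeq: "is_coequalizer C u v e"
  shows "epi C e"
proof (rule epiI)
  note ce = coequalizerD[OF coeq]
  show "arr e" by (fact ce(3))
  fix g h assume gh: "arr g" "arr h" "Dom C g = Cod C e" "Dom C h = Cod C e" "Cod C h = Cod C g"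
    and eq: "g \<cdot> e = h \<cdot> e"
  have "g \<cdot> e \<cdot> u = g \<cdot> e \<cdot> v"
    using ce gh by simp
  then have "\<exists>!k. k \<in> hom C (Cod C e) (Cod C (g \<cdot> e)) \<and> k \<cdot> e = g \<cdot> e"
    by (intro coequalizer_universal[OF coeq]) (use ce gh in simp_all)
  then show "g = h"
    by (rule ex1_unique) (use ce gh eq in \<open>simp_all add: hom_def\<close>)
qed

lemma coequalizer_lift:
  assumes coeq: "is_coequalizer C u v e" and "arr w" "Dom C w = Cod C u" "w \<cdot> u = w \<cdot> v"
  obtains h where "arr h" "Dom C h = Cod C e" "Cod C h = Cod C w" "h \<cdot> e = w"
  using coequalizer_universal[OF assms] unfolding hom_def by auto

lemma regular_epi_epi: "regular_epi C e \<Longrightarrow> epi C e"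
  unfolding regular_epi_def using coequalizer_epi by blast

lemma regular_epi_arr: "regular_epi C e \<Longrightarrow> arr e"
  using epi_arr regular_epi_epi by blast

lemma regular_epi_mono_diagonal:
  assumes e: "regular_epi C e" and m: "mono C m" and a: "arr a" "Dom C a = Dom C e" "Cod C a = Dom C m"
    and b: "arr b" "Dom C b = Cod C e" and sq: "m \<cdot> a = b \<cdot> e"
  obtains d where "arr d" "Dom C d = Cod C e" "Cod C d = Dom C m" "d \<cdot> e = a" "m \<cdot> d = b"
proof -
  obtain u v where coeq: "is_coequalizer C u v e"
    using e unfolding regular_epi_def by blast
  note ce = coequalizerD[OF coeq] and m_arr = mono_arr[OF m]
  have "m \<cdot> a \<cdot> u = b \<cdot> e \<cdot> u"
    by (rule comp_square[OF sq]) (use ce a b m_arr in simp_all)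
  also have "\<dots> = b \<cdot> e \<cdot> v"
    using ce by simp
  also have "\<dots> = m \<cdot> a \<cdot> v"
    by (rule comp_square[OF sq, symmetric]) (use ce a b m_arr in simp_all)
  finally have au: "a \<cdot> u = a \<cdot> v"
    by (rule monoD[OF m, rotated -1]) (use ce a in simp_all)
  obtain d where d: "arr d" "Dom C d = Cod C e" "Cod C d = Dom C m" "d \<cdot> e = a"
    by (rule coequalizer_lift[OF coeq a(1) _ au]) (use ce a in simp_all)
  have "Cod C b = Cod C m"
    using arg_cong[where f = "Cod C", OF sq] ce a b m_arr by simp
  have "m \<cdot> d = b"
    by (rule epiD[OF coequalizer_epi[OF coeq], of "m \<cdot> d" b])
      (use ce d b m_arr sq \<open>Cod C b = Cod C m\<close> in simp_all)
  with d show ?thesis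
    using that by blast
qed

section \<open>Jointly epic pairs\<close>

lemma jointly_extremally_epicI:
  assumes "arr a" "arr b" "Cod C a = Cod C b"
    and "\<And>m a' b'. mono C m \<Longrightarrow> Cod C m = Cod C a \<Longrightarrow> arr a' \<Longrightarrow> Cod C a' = Dom C m \<Longrightarrow>
      m \<cdot> a' = a \<Longrightarrow> arr b' \<Longrightarrow> Cod C b' = Dom C m \<Longrightarrow> m \<cdot> b' = b \<Longrightarrow> iso C m"
  shows "jointly_extremally_epic C a b"
  using assms unfolding jointly_extremally_epic_def by blast

lemma jointly_extremally_epicD:
  assumes "jointly_extremally_epic C a b" "mono C m" "Cod C m = Cod C a"
    "arr a'" "Cod C a' = Dom C m" "m \<cdot> a' = a" "arr b'" "Cod C b' = Dom C m" "m \<cdot> b' = b"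
  shows "iso C m"
  using assms unfolding jointly_extremally_epic_def by blast

text \<open>Uniqueness of the diagonal is automatic, since it is determined by its composite
  with the monomorphism.\<close>

lemma jointly_strongly_epicI:
  assumes "arr a" "arr b" "Cod C a = Cod C b"
    and "\<And>m v a' b'. mono C m \<Longrightarrow> arr v \<Longrightarrow> Dom C v = Cod C a \<Longrightarrow> Cod C v = Cod C m \<Longrightarrow>
      arr a' \<Longrightarrow> Dom C a' = Dom C a \<Longrightarrow> Cod C a' = Dom C m \<Longrightarrow>
      arr b' \<Longrightarrow> Dom C b' = Dom C b \<Longrightarrow> Cod C b' = Dom C m \<Longrightarrow>
      m \<cdot> a' = v \<cdot> a \<Longrightarrow> m \<cdot> b' = v \<cdot> b \<Longrightarrow>
      \<exists>d. arr d \<and> Dom C d = Cod C a \<and> Cod C d = Dom C m \<and> m \<cdot> d = v \<and> d \<cdot> a = a' \<and> d \<cdot> b = b'"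
  shows "jointly_strongly_epic C a b"
  unfolding jointly_strongly_epic_def
proof (intro conjI allI impI)
  fix m v a' b' assume "mono C m \<and> v \<in> hom C (Cod C a) (Cod C m) \<and>
    a' \<in> hom C (Dom C a) (Dom C m) \<and> b' \<in> hom C (Dom C b) (Dom C m) \<and>
    m \<cdot> a' = v \<cdot> a \<and> m \<cdot> b' = v \<cdot> b"
  then have m: "mono C m" and v: "arr v" "Dom C v = Cod C a" "Cod C v = Cod C m"
    and a': "arr a'" "Dom C a' = Dom C a" "Cod C a' = Dom C m" "m \<cdot> a' = v \<cdot> a"
    and b': "arr b'" "Dom C b' = Dom C b" "Cod C b' = Dom C m" "m \<cdot> b' = v \<cdot> b"
    unfolding hom_def by simp_all
  have "\<exists>d. arr d \<and> Dom C d = Cod C a \<and> Cod C d = Dom C m \<and> m \<cdot> d = v \<and> d \<cdot> a = a' \<and> d \<cdot> b = b'"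
    by (rule assms(4)[OF m v a'(1-3) b'(1-3) a'(4) b'(4)])
  then obtain d where d: "arr d" "Dom C d = Cod C a" "Cod C d = Dom C m" "m \<cdot> d = v"
    "d \<cdot> a = a'" "d \<cdot> b = b'"
    by blast
  show "\<exists>!d. d \<in> hom C (Cod C a) (Dom C m) \<and> m \<cdot> d = v \<and> d \<cdot> a = a' \<and> d \<cdot> b = b'"
  proof (rule ex1I)
    show "d \<in> hom C (Cod C a) (Dom C m) \<and> m \<cdot> d = v \<and> d \<cdot> a = a' \<and> d \<cdot> b = b'"
      using d unfolding hom_def by simp
  next
    fix d' assume "d' \<in> hom C (Cod C a) (Dom C m) \<and> m \<cdot> d' = v \<and> d' \<cdot> a = a' \<and> d' \<cdot> b = b'"
    then show "d' = d"
      by - (rule monoD[OF m], use d in \<open>simp_all add: hom_def\<close>)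
  qed
qed (use assms in simp_all)

lemma jointly_strongly_epicE:
  assumes jse: "jointly_strongly_epic C a b" and m: "mono C m"
    and v: "arr v" "Dom C v = Cod C a" "Cod C v = Cod C m"
    and a': "arr a'" "Dom C a' = Dom C a" "Cod C a' = Dom C m" "m \<cdot> a' = v \<cdot> a"
    and b': "arr b'" "Dom C b' = Dom C b" "Cod C b' = Dom C m" "m \<cdot> b' = v \<cdot> b"
  obtains d where "arr d" "Dom C d = Cod C a" "Cod C d = Dom C m" "m \<cdot> d = v" "d \<cdot> a = a'" "d \<cdot> b = b'"
proof -
  from jse have "\<forall>m v a' b'. mono C m \<and> v \<in> hom C (Cod C a) (Cod C m) \<and>
      a' \<in> hom C (Dom C a) (Dom C m) \<and> b' \<in> hom C (Dom C b) (Dom C m) \<and>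
      m \<cdot> a' = v \<cdot> a \<and> m \<cdot> b' = v \<cdot> b \<longrightarrow>
      (\<exists>!d. d \<in> hom C (Cod C a) (Dom C m) \<and> m \<cdot> d = v \<and> d \<cdot> a = a' \<and> d \<cdot> b = b')"
    unfolding jointly_strongly_epic_def by (elim conjE)
  then have "\<exists>!d. d \<in> hom C (Cod C a) (Dom C m) \<and> m \<cdot> d = v \<and> d \<cdot> a = a' \<and> d \<cdot> b = b'"
    using m v a' b' unfolding hom_def by simp
  then show ?thesis
    using that unfolding hom_def by blast
qed

lemma jointly_extremally_epic_if_strongly:
  assumes jse: "jointly_strongly_epic C a b"
  shows "jointly_extremally_epic C a b"
proof (rule jointly_extremally_epicI)
  show ab: "arr a" "arr b" "Cod C a = Cod C b"
    using jointly_strongly_epic_arr[OF jse] by simp_all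
  fix m a' b' assume m: "mono C m" "Cod C m = Cod C a"
    and a': "arr a'" "Cod C a' = Dom C m" "m \<cdot> a' = a"
    and b': "arr b'" "Cod C b' = Dom C m" "m \<cdot> b' = b"
  note m_arr = mono_arr[OF m(1)]
  have "Dom C a' = Dom C a" "Dom C b' = Dom C b"
    using arg_cong[where f = "Dom C", OF a'(3)] arg_cong[where f = "Dom C", OF b'(3)] m_arr a'(1,2) b'(1,2)
    by simp_all
  then obtain d where "arr d" "Dom C d = Cod C m" "Cod C d = Dom C m" "m \<cdot> d = Id C (Cod C m)"
    by - (rule jointly_strongly_epicE[OF jse m(1), of "Id C (Cod C m)" a' b'],
          use ab m m_arr a' b' in \<open>simp_all add: cod_obj\<close>)
  then show "iso C m"
    by (rule mono_split_epi_iso[OF m(1)])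
qed

lemma jointly_strongly_epic_if_extremally:
  assumes pullbacks: "has_pullbacks C" and jee: "jointly_extremally_epic C a b"
  shows "jointly_strongly_epic C a b"
proof (rule jointly_strongly_epicI)
  show ab: "arr a" "arr b" "Cod C a = Cod C b"
    using jointly_extremally_epic_arr[OF jee] by simp_all
  fix m v a' b' assume m: "mono C m" and v: "arr v" "Dom C v = Cod C a" "Cod C v = Cod C m"
    and a': "arr a'" "Dom C a' = Dom C a" "Cod C a' = Dom C m" "m \<cdot> a' = v \<cdot> a"
    and b': "arr b'" "Dom C b' = Dom C b" "Cod C b' = Dom C m" "m \<cdot> b' = v \<cdot> b"
  obtain p q where pb: "is_pullback C v m p q"
    using pullbacks mono_arr[OF m] v unfolding has_pullbacks_def by metis
  note sq = pullbackD[OF pb]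
  obtain ua where ua: "arr ua" "Cod C ua = Dom C p" "p \<cdot> ua = a" "q \<cdot> ua = a'"
    by (rule pullback_lift[OF pb _ a'(1) _ _ _ a'(4)[symmetric]]) (use ab v a' in simp_all)
  obtain ub where ub: "arr ub" "Cod C ub = Dom C p" "p \<cdot> ub = b" "q \<cdot> ub = b'"
    by (rule pullback_lift[OF pb _ b'(1) _ _ _ b'(4)[symmetric]]) (use ab v b' in simp_all)
  have "iso C p"
    by (rule jointly_extremally_epicD[OF jee mono_pullback[OF pb m] _ ua(1,2,3) ub(1,2,3)])
      (use sq v in simp)
  then obtain d where d: "arr d" "Dom C d = Dom C v" "Cod C d = Dom C m" "m \<cdot> d = v" "d \<cdot> p = q"
    by (rule pullback_iso_factor[OF pb])
  have "d \<cdot> a = a'" "d \<cdot> b = b'"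
    using comp_reassoc[OF d(5), of ua] comp_reassoc[OF d(5), of ub] sq d ua ub by simp_all
  with d v show "\<exists>d. arr d \<and> Dom C d = Cod C a \<and> Cod C d = Dom C m \<and> m \<cdot> d = v \<and> d \<cdot> a = a' \<and> d \<cdot> b = b'"
    by auto
qed

lemma jointly_strongly_epic_iff_extremally:
  "has_pullbacks C \<Longrightarrow> jointly_strongly_epic C a b \<longleftrightarrow> jointly_extremally_epic C a b"
  using jointly_strongly_epic_if_extremally jointly_extremally_epic_if_strongly by blast

lemma jointly_extremally_epic_comp_regular_epi:
  assumes jee: "jointly_extremally_epic C n s" and t: "regular_epi C t" "Cod C t = Dom C n"
  shows "jointly_extremally_epic C (n \<cdot> t) s"
proof (rule jointly_extremally_epicI)
  have ns: "arr n" "arr s" "Cod C n = Cod C s"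
    using jointly_extremally_epic_arr[OF jee] by simp_all
  note t_arr = regular_epi_arr[OF t(1)]
  show "arr (n \<cdot> t)" "arr s" "Cod C (n \<cdot> t) = Cod C s"
    using ns t_arr t(2) by simp_all
  fix m x s' assume m: "mono C m" "Cod C m = Cod C (n \<cdot> t)"
    and x: "arr x" "Cod C x = Dom C m" "m \<cdot> x = n \<cdot> t"
    and s': "arr s'" "Cod C s' = Dom C m" "m \<cdot> s' = s"
  have "Dom C x = Dom C t"
    using arg_cong[where f = "Dom C", OF x(3)] mono_arr[OF m(1)] x(1,2) ns t_arr t(2) by simp
  then obtain d where d: "arr d" "Cod C d = Dom C m" "m \<cdot> d = n"
    by - (rule regular_epi_mono_diagonal[OF t(1) m(1) x(1) _ x(2) ns(1) _ x(3)], use t(2) in simp_all)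
  show "iso C m"
    by (rule jointly_extremally_epicD[OF jee m(1) _ d s']) (use m(2) ns t_arr t(2) in simp)
qed

end

section \<open>Regular categories\<close>

locale regular_cat = elementary_category +
  assumes regular: "regular_category C"
begin

lemma has_pullbacks: "has_pullbacks C"
  using regular unfolding regular_category_def finitely_complete_def by blast

lemma pullback_exists:
  assumes "arr f" "arr g" "Cod C g = Cod C f"
  obtains p q where "is_pullback C f g p q"
  using has_pullbacks assms unfolding has_pullbacks_def by metis

lemma kernel_pair_coequalizer: "is_pullback C f f p q \<Longrightarrow> \<exists>e. is_coequalizer C p q e"
  using regular unfolding regular_category_def by blast

lemma regular_epi_pullback: "regular_epi C e \<Longrightarrow> is_pullback C e g p q \<Longrightarrow> regular_epi C q"
  using regular unfolding regular_category_def by blast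

lemma regular_epi_cover:
  assumes e: "regular_epi C e" and a: "arr a" "Cod C a = Cod C e"
  obtains r c where "regular_epi C c" "Cod C c = Dom C a" "arr r" "Dom C r = Dom C c"
    "Cod C r = Dom C e" "e \<cdot> r = a \<cdot> c"
proof -
  obtain r c where pb: "is_pullback C e a r c"
    by (rule pullback_exists[OF regular_epi_arr[OF e] a])
  note sq = pullbackD[OF pb]
  show ?thesis
    by (rule that[OF regular_epi_pullback[OF e pb]]) (use sq in simp_all)
qed

lemma regular_epi_cover_pair:
  assumes e: "regular_epi C e" and g: "arr g" "Cod C g = Cod C e"
    and h: "arr h" "Cod C h = Cod C e" "Dom C h = Dom C g"
  obtains c r r' where "epi C c" "Cod C c = Dom C g" "arr r" "arr r'" "Dom C r = Dom C c"
    "Dom C r' = Dom C c" "Cod C r = Dom C e" "Cod C r' = Dom C e" "e \<cdot> r = g \<cdot> c" "e \<cdot> r' = h \<cdot> c"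
proof -
  obtain r1 c1 where c1: "regular_epi C c1" "Cod C c1 = Dom C g" "arr r1" "Dom C r1 = Dom C c1"
      "Cod C r1 = Dom C e" "e \<cdot> r1 = g \<cdot> c1"
    by (rule regular_epi_cover[OF e g])
  note c1_arr = regular_epi_arr[OF c1(1)]
  obtain r2 c2 where c2: "regular_epi C c2" "Cod C c2 = Dom C c1" "arr r2" "Dom C r2 = Dom C c2"
      "Cod C r2 = Dom C e" "e \<cdot> r2 = (h \<cdot> c1) \<cdot> c2"
    by (rule regular_epi_cover[OF e, of "h \<cdot> c1"]) (use h c1 c1_arr in simp_all)
  note c2_arr = regular_epi_arr[OF c2(1)]
  have "e \<cdot> r1 \<cdot> c2 = g \<cdot> c1 \<cdot> c2"
    by (rule comp_square[OF c1(6)]) (use g c1 c1_arr c2 c2_arr regular_epi_arr[OF e] in simp_all)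
  moreover have "e \<cdot> r2 = h \<cdot> c1 \<cdot> c2"
    using c2(2,6) h c1 c1_arr c2_arr by simp
  moreover have "epi C (c1 \<cdot> c2)"
    by (rule epi_comp[OF regular_epi_epi[OF c1(1)] regular_epi_epi[OF c2(1)] c2(2)])
  ultimately show ?thesis
    by - (rule that[of "c1 \<cdot> c2" "r1 \<cdot> c2" r2], use c1 c1_arr c2 c2_arr in simp_all)
qed

text \<open>A pair of arrows identified by m is covered by an epimorphism and then lifted through
  the kernel pair of m e, which e coequalizes.\<close>

lemma kernel_pair_coequalizer_factor_mono:
  assumes kp: "is_pullback C (m \<cdot> e) (m \<cdot> e) p q" and coeq: "is_coequalizer C p q e"
    and m: "arr m" "Dom C m = Cod C e"
  shows "mono C m"
proof (rule monoI)
  note K = pullbackD[OF kp] and E = coequalizerD[OF coeq]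
  show "arr m" by (fact m(1))
  fix g h assume gh: "arr g" "arr h" "Cod C g = Dom C m" "Cod C h = Dom C m" "Dom C h = Dom C g"
    and eq: "m \<cdot> g = m \<cdot> h"
  have "regular_epi C e"
    using coeq unfolding regular_epi_def by blast
  then obtain c r r' where c: "epi C c" "Cod C c = Dom C g" "arr r" "arr r'" "Dom C r = Dom C c"
    "Dom C r' = Dom C c" "Cod C r = Dom C e" "Cod C r' = Dom C e" "e \<cdot> r = g \<cdot> c" "e \<cdot> r' = h \<cdot> c"
    by (rule regular_epi_cover_pair[OF _ gh(1) _ gh(2)]) (use gh m in simp_all)
  note c_arr = epi_arr[OF c(1)]
  have "(m \<cdot> e) \<cdot> r = m \<cdot> g \<cdot> c"
    using c(3,7,9) E m by simp
  also have "\<dots> = m \<cdot> h \<cdot> c"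
    by (rule comp_square[OF eq]) (use gh c c_arr m in simp_all)
  also have "\<dots> = (m \<cdot> e) \<cdot> r'"
    using c(4,8,10) E m by simp
  finally have comm: "(m \<cdot> e) \<cdot> r = (m \<cdot> e) \<cdot> r'" .
  obtain w where w: "arr w" "Cod C w = Dom C p" "p \<cdot> w = r" "q \<cdot> w = r'"
    by (rule pullback_lift[OF kp c(3,4) _ _ _ comm]) (use c(5-8) E m in simp_all)
  have "e \<cdot> p \<cdot> w = e \<cdot> q \<cdot> w"
    by (rule comp_square[OF E(7)]) (use E K w in simp_all)
  then have "g \<cdot> c = h \<cdot> c"
    using w c by simp
  then show "g = h"
    by (rule epiD[OF c(1), rotated -1]) (use gh c in simp_all)
qed

lemma image_factorization:
  assumes y: "arr y"
  obtains e m where "regular_epi C e" "mono C m" "Cod C e = Dom C m" "m \<cdot> e = y"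
proof -
  obtain p q where kp: "is_pullback C y y p q"
    by (rule pullback_exists[OF y y refl])
  then obtain e where coeq: "is_coequalizer C p q e"
    using kernel_pair_coequalizer by blast
  note K = pullbackD[OF kp] and E = coequalizerD[OF coeq]
  obtain m where m: "arr m" "Dom C m = Cod C e" "Cod C m = Cod C y" "m \<cdot> e = y"
    by (rule coequalizer_lift[OF coeq y]) (use K in simp_all)
  have "mono C m"
    by (rule kernel_pair_coequalizer_factor_mono[OF _ coeq m(1,2)]) (use kp m(4) in simp)
  moreover have "regular_epi C e"
    using coeq unfolding regular_epi_def by blast
  ultimately show ?thesis
    using that m by simp
qed

lemma pullback_along_comp_regular_epi:
  assumes pb: "is_pullback C f (m \<cdot> e) x y'" and pbm: "is_pullback C f m n m'"
    and e: "regular_epi C e" "Cod C e = Dom C m"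
  obtains t where "regular_epi C t" "Cod C t = Dom C n" "n \<cdot> t = x"
proof -
  note X = pullbackD[OF pb] and N = pullbackD[OF pbm] and e_arr = regular_epi_arr[OF e(1)]
  have "f \<cdot> x = m \<cdot> e \<cdot> y'"
    using X N e e_arr by simp
  then obtain t where t: "arr t" "Dom C t = Dom C x" "Cod C t = Dom C n" "n \<cdot> t = x" "m' \<cdot> t = e \<cdot> y'"
    by - (rule pullback_lift[OF pbm X(3)], use X N e e_arr in simp_all)
  have "is_pullback C e m' y' t"
    by (rule pullback_left_square[OF pbm pb e_arr e(2) t(1,2,3,4,5)])
  then show ?thesis
    using that t regular_epi_pullback[OF e(1)] by blast
qed

lemma strongly_split_iff_pullbacks_of_monos:
  assumes f: "arr f"
  shows "strongly_split C f s \<longleftrightarrow>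
    (\<forall>m n m'. mono C m \<and> Cod C m = Cod C f \<and> is_pullback C f m n m' \<longrightarrow>
       jointly_extremally_epic C n s)"
  unfolding strongly_split_def
proof (intro iffI allI impI)
  fix m n m' assume "\<forall>y x y'. arr y \<and> Cod C y = Cod C f \<and> is_pullback C f y x y' \<longrightarrow>
      jointly_extremally_epic C x s"
    and "mono C m \<and> Cod C m = Cod C f \<and> is_pullback C f m n m'"
  then show "jointly_extremally_epic C n s"
    using mono_arr by blast
next
  fix y x y' assume mono_condition: "\<forall>m n m'. mono C m \<and> Cod C m = Cod C f \<and> is_pullback C f m n m' \<longrightarrow>
      jointly_extremally_epic C n s"
    and "arr y \<and> Cod C y = Cod C f \<and> is_pullback C f y x y'"
  then have y: "arr y" "Cod C y = Cod C f" and pb: "is_pullback C f y x y'"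
    by simp_all
  obtain e m where im: "regular_epi C e" "mono C m" "Cod C e = Dom C m" "m \<cdot> e = y"
    by (rule image_factorization[OF y(1)])
  have m_arr: "arr m" and cod_m: "Cod C m = Cod C f"
    using mono_arr[OF im(2)] im(3,4) y regular_epi_arr[OF im(1)] by auto
  obtain n m' where pbm: "is_pullback C f m n m'"
    by (rule pullback_exists[OF f m_arr cod_m])
  obtain t where t: "regular_epi C t" "Cod C t = Dom C n" "n \<cdot> t = x"
    by (rule pullback_along_comp_regular_epi[OF pb[folded im(4)] pbm im(1,3)])
  have "jointly_extremally_epic C n s"
    using mono_condition im(2) cod_m pbm by blast
  from jointly_extremally_epic_comp_regular_epi[OF this t(1,2)]
  show "jointly_extremally_epic C x s"
    by (simp add: t(3))
qed

end

theorem proposition8p2: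
  fixes C :: "('o, 'a) cat" and f s :: 'a
  assumes "regular_category C"
    and "split_epi C f s"
  shows "strongly_split C f s \<longleftrightarrow>
    (\<forall>m n m'. mono C m \<and> Cod C m = Cod C f \<and> is_pullback C f m n m' \<longrightarrow>
       jointly_strongly_epic C s n)"
proof -
  interpret regular_cat C
    using assms(1) by unfold_locales (simp_all add: regular_category_def)
  have "f \<in> Arr C"
    using assms(2) unfolding split_epi_def by simp
  then show ?thesis
    by (simp add: strongly_split_iff_pullbacks_of_monos jointly_strongly_epic_iff_extremally[OF has_pullbacks]
        jointly_extremally_epic_commute)
qed

end
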